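(* Let $j,k,\ell$ be integers with $3\leq j+2\leq\ell\leq k$, and let $G$ be a graph on $n$ vertices with minimum degree $\delta(G)>\frac{(k-1)n}{k}$ and at least two $K_{k+1}$-components. Suppose $G$ does not contain the configuration $(\dagger^{(p)})^k_q$ for all pairs $p,q$ of positive integers such that $p<q<\ell$, or such that $j<p<q=\ell$. Then $G$ does not contain the configuration $(\dagger^{(j)})^k_\ell$.
   Context: A $K_{k+1}$-walk in $G$ is a sequence of copies of $K_k$ in which consecutive copies lie in a common copy of $K_{k+1}$; the endpoints are then $K_{k+1}$-connected, and the equivalence classes of copies of $K_k$ are the $K_{k+1}$-components. For integers $1\leq j<\ell\leq k$, $G$ contains the configuration $(\dagger^{(j)})^k_\ell$ if there are (not necessarily distinct) vertices $u_1,\dots,u_k$, $v_{j+1},\dots,v_\ell$ and $w_{p1},\dots,w_{p(\ell-1)}$ for $j<p\leq\ell$ such that: (CG1) $u_1\dots u_k$ is a copy of $K_k$ lying in some $K_{k+1}$-component $C$ of $G$; (CG2) $u_1\dots u_jv_{j+1}\dots v_\ell u_{\ell+1}\dots u_k$ is a copy of $K_k$ in $G$ not in $C$; (CG3) for every $j<p\leq\ell$, $u_pw_{p1}\dots w_{p(\ell-1)}u_{\ell+1}\dots u_k$ is a copy of $K_k$ in $G$ not in $C$. *)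

theory Defs
  imports Complex_Main
begin

definition simple_graph :: "'a set \<Rightarrow> ('a \<Rightarrow> 'a \<Rightarrow> bool) \<Rightarrow> bool" where
  "simple_graph V E \<longleftrightarrow> finite V \<and> (\<forall>x y. E x y \<longrightarrow> x \<in> V \<and> y \<in> V)
     \<and> (\<forall>x y. E x y \<longrightarrow> E y x) \<and> (\<forall>x. \<not> E x x)"

definition degree :: "'a set \<Rightarrow> ('a \<Rightarrow> 'a \<Rightarrow> bool) \<Rightarrow> 'a \<Rightarrow> nat" where
  "degree V E v = card {u \<in> V. E v u}"

text \<open>A copy of K_k in G, identified with its (k-element) vertex set.\<close>
definition is_clique :: "'a set \<Rightarrow> ('a \<Rightarrow> 'a \<Rightarrow> bool) \<Rightarrow> nat \<Rightarrow> 'a set \<Rightarrow> bool" where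
  "is_clique V E k S \<longleftrightarrow> S \<subseteq> V \<and> finite S \<and> card S = k
     \<and> (\<forall>x\<in>S. \<forall>y\<in>S. x \<noteq> y \<longrightarrow> E x y)"

definition kstep :: "'a set \<Rightarrow> ('a \<Rightarrow> 'a \<Rightarrow> bool) \<Rightarrow> nat \<Rightarrow> 'a set \<Rightarrow> 'a set \<Rightarrow> bool" where
  "kstep V E k S T \<longleftrightarrow> is_clique V E k S \<and> is_clique V E k T
     \<and> (\<exists>R. is_clique V E (k+1) R \<and> S \<subseteq> R \<and> T \<subseteq> R)"

definition kconn :: "'a set \<Rightarrow> ('a \<Rightarrow> 'a \<Rightarrow> bool) \<Rightarrow> nat \<Rightarrow> 'a set \<Rightarrow> 'a set \<Rightarrow> bool" where
  "kconn V E k S T \<longleftrightarrow> is_clique V E k S \<and> (kstep V E k)\<^sup>*\<^sup>* S T"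

definition kcomponents :: "'a set \<Rightarrow> ('a \<Rightarrow> 'a \<Rightarrow> bool) \<Rightarrow> nat \<Rightarrow> 'a set set set" where
  "kcomponents V E k = {C. \<exists>S. is_clique V E k S \<and> C = {T. kconn V E k S T}}"

text \<open>The configuration (dagger^(j))^k_l. The component C of CG1 is the component
of the copy u_1...u_k, i.e. the set of copies K_{k+1}-connected to it.\<close>
definition config :: "'a set \<Rightarrow> ('a \<Rightarrow> 'a \<Rightarrow> bool) \<Rightarrow> nat \<Rightarrow> nat \<Rightarrow> nat \<Rightarrow> bool" where
  "config V E k j l \<longleftrightarrow>
    (\<exists>(u :: nat \<Rightarrow> 'a) (v :: nat \<Rightarrow> 'a) (w :: nat \<Rightarrow> nat \<Rightarrow> 'a).
       is_clique V E k (u ` {1..k})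
     \<and> is_clique V E k (u ` {1..j} \<union> v ` {j+1..l} \<union> u ` {l+1..k})
     \<and> \<not> kconn V E k (u ` {1..k}) (u ` {1..j} \<union> v ` {j+1..l} \<union> u ` {l+1..k})
     \<and> (\<forall>p. j < p \<and> p \<le> l \<longrightarrow>
          is_clique V E k (insert (u p) (w p ` {1..l-1}) \<union> u ` {l+1..k})
        \<and> \<not> kconn V E k (u ` {1..k}) (insert (u p) (w p ` {1..l-1}) \<union> u ` {l+1..k})))"

end

theory Submission
  imports Defs
begin

text \<open>
Write the configuration (\<dagger>^(j))^k_l in terms of vertex sets: a base clique
P \<union> Q \<union> R in the component C with |P| = j and |R| = k - l, a clique P \<union> D \<union> R outside C,
and for every q \<in> Q a clique outside C containing q and R.

Since (\<dagger>^(l-1))^k_l is excluded, exchanging one vertex q \<in> Q of a clique in C that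
contains R never leaves C: otherwise the two cliques and the witness clique of q would form
that configuration. By the minimum degree every k vertices have a common neighbour, so for
s \<in> D we may exchange, one at a time, all vertices of Q but one for neighbours of s, and
finally the last one for s itself. Hence for every s \<in> D some clique Y_s of C contains
P \<union> R \<union> {s}. Now P \<union> D \<union> R is a base clique outside C, and moving one d \<in> D into P, the
cliques Y_s serve as witnesses of (\<dagger>^(j+1))^k_l, which is excluded as well.
\<close>

lemma kconn_refl: "is_clique V E k S \<Longrightarrow> kconn V E k S S"
  by (simp add: kconn_def)

lemma kconn_is_clique: "kconn V E k S T \<Longrightarrow> is_clique V E k T"
proof -
  assume "kconn V E k S T"
  then have "(kstep V E k)\<^sup>*\<^sup>* S T" "is_clique V E k S" by (auto simp: kconn_def)
  then show "is_clique V E k T"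
    by (induction rule: rtranclp_induct) (auto simp: kstep_def)
qed

lemma kconn_trans: "kconn V E k S T \<Longrightarrow> kconn V E k T U \<Longrightarrow> kconn V E k S U"
  unfolding kconn_def by auto

lemma kconn_sym: "kconn V E k S T \<Longrightarrow> kconn V E k T S"
proof -
  assume ST: "kconn V E k S T"
  have "symp (kstep V E k)"
    by (auto simp: symp_def kstep_def)
  then have "(kstep V E k)\<^sup>*\<^sup>* T S"
    using ST by (simp add: kconn_def sympD[OF symp_rtranclp])
  then show ?thesis
    using kconn_is_clique[OF ST] by (simp add: kconn_def)
qed

lemma not_kconn_if_kconn: "kconn V E k S T \<Longrightarrow> \<not> kconn V E k S U \<Longrightarrow> \<not> kconn V E k T U"
  using kconn_trans by blast

lemma ex_common_neighbour:
  assumes G: "simple_graph V E"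
    and deg: "\<forall>v\<in>V. real (degree V E v) > real (k - 1) * real (card V) / real k"
    and S: "S \<subseteq> V" "S \<noteq> {}" "card S \<le> k"
  shows "\<exists>z\<in>V. \<forall>s\<in>S. E z s"
proof -
  have fV: "finite V" and E_sym: "\<And>x y. E x y \<Longrightarrow> E y x"
    using G by (auto simp: simple_graph_def)
  have fS: "finite S" using S(1) fV by (rule finite_subset)
  have "card S > 0" using fS S(2) by (simp add: card_gt_0_iff)
  then have k: "k \<ge> 1" using S(3) by linarith
  define M where "M s = {u \<in> V. \<not> E s u}" for s
  have card_M: "real (card (M s)) < real (card V) / real k" if "s \<in> S" for s
  proof -
    have "V = {u \<in> V. E s u} \<union> M s" "{u \<in> V. E s u} \<inter> M s = {}"
      by (auto simp: M_def)
    then have "card V = degree V E s + card (M s)"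
      unfolding degree_def using fV by (metis card_Un_disjoint finite_Un)
    moreover have "real (degree V E s) > real (k - 1) * real (card V) / real k"
      using deg S(1) that by blast
    moreover have "real (k - 1) * real (card V) / real k = real (card V) - real (card V) / real k"
      using k by (simp add: of_nat_diff field_simps)
    ultimately show ?thesis by linarith
  qed
  have "real (card (\<Union>s\<in>S. M s)) \<le> (\<Sum>s\<in>S. real (card (M s)))"
    using card_UN_le[OF fS, of M] by (metis of_nat_le_iff of_nat_sum)
  also have "\<dots> < (\<Sum>s\<in>S. real (card V) / real k)"
    by (rule sum_strict_mono[OF fS S(2) card_M])
  also have "\<dots> \<le> real (card V)"
    using S(3) k by (simp add: field_simps mult_right_mono)
  finally have "card (\<Union>s\<in>S. M s) < card V" by simp
  then have "(\<Union>s\<in>S. M s) \<noteq> V" by blast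
  moreover have "(\<Union>s\<in>S. M s) \<subseteq> V" by (auto simp: M_def)
  ultimately obtain z where z: "z \<in> V" "z \<notin> (\<Union>s\<in>S. M s)" by blast
  then have "E s z" if "s \<in> S" for s using that by (auto simp: M_def)
  then show ?thesis using z(1) E_sym by blast
qed

lemma is_clique_insert_Diff:
  assumes G: "simple_graph V E" and K: "is_clique V E k K" and x: "x \<in> K"
    and z: "z \<in> V" "\<forall>a\<in>K - {x}. E z a"
  shows "is_clique V E k (insert z (K - {x}))"
proof -
  have E_sym: "\<And>x y. E x y \<Longrightarrow> E y x" and irr: "\<And>x. \<not> E x x"
    using G by (auto simp: simple_graph_def)
  have "z \<notin> K - {x}" using z(2) irr by blast
  moreover have "finite K" using K by (simp add: is_clique_def)
  ultimately have "card (insert z (K - {x})) = card K"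
    using x card_Suc_Diff1[of K x] by simp
  moreover have "\<forall>a\<in>K - {x}. E a z" using z(2) E_sym by blast
  ultimately show ?thesis
    using K z by (auto simp: is_clique_def)
qed

lemma ex_clique_exchange:
  assumes G: "simple_graph V E"
    and deg: "\<forall>v\<in>V. real (degree V E v) > real (k - 1) * real (card V) / real k"
    and K: "is_clique V E k K" and x: "x \<in> K" and a: "a \<in> V"
  shows "\<exists>z. is_clique V E k (insert z (K - {x})) \<and> E z a"
proof -
  have "insert a (K - {x}) \<subseteq> V" using K a by (auto simp: is_clique_def)
  moreover have "card (insert a (K - {x})) \<le> k"
    using K x by (intro card_insert_le_m1) (auto simp: is_clique_def card_gt_0_iff)
  ultimately obtain z where z: "z \<in> V" "\<forall>s\<in>insert a (K - {x}). E z s"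
    using ex_common_neighbour[OF G deg] by blast
  have "is_clique V E k (insert z (K - {x}))"
    by (rule is_clique_insert_Diff[OF G K x]) (use z in auto)
  then show ?thesis using z by blast
qed

lemma card_eq_imp_ex_image: "finite A \<Longrightarrow> finite B \<Longrightarrow> card A = card B \<Longrightarrow> \<exists>f. f ` A = B"
  by (metis bij_betw_imp_surj_on finite_same_card_bij)

lemma ex_image_intervals:
  assumes "finite P" "finite Q" "finite R"
    and "card P = j" "card Q = l - j" "card R = k - l" "j \<le> l" "l \<le> k"
  shows "\<exists>u. u ` {1..j} = P \<and> u ` {j+1..l} = Q \<and> u ` {l+1..k} = R"
proof -
  obtain uP where uP: "uP ` {1..j} = P"
    using card_eq_imp_ex_image[of "{1..j}" P] assms by auto
  obtain uQ where uQ: "uQ ` {j+1..l} = Q"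
    using card_eq_imp_ex_image[of "{j+1..l}" Q] assms by auto
  obtain uR where uR: "uR ` {l+1..k} = R"
    using card_eq_imp_ex_image[of "{l+1..k}" R] assms by auto
  define u where "u i = (if i \<le> j then uP i else if i \<le> l then uQ i else uR i)" for i
  have "u ` {1..j} = P" unfolding uP[symmetric] by (rule image_cong) (auto simp: u_def)
  moreover have "u ` {j+1..l} = Q" unfolding uQ[symmetric] by (rule image_cong) (auto simp: u_def)
  moreover have "u ` {l+1..k} = R"
    unfolding uR[symmetric] by (rule image_cong) (use assms(7) in \<open>auto simp: u_def\<close>)
  ultimately show ?thesis by blast
qed

lemma ex_image_insert_Un:
  assumes W: "finite W" "card W = k" "insert q R \<subseteq> W"
    and R: "q \<notin> R" "card R = k - l" and l: "l \<le> k"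
  shows "\<exists>g. insert q (g ` {1..l-1}) \<union> R = W"
proof -
  have "finite (insert q R)" using W(3,1) by (rule finite_subset)
  then have "card (W - insert q R) = card W - card (insert q R)"
    using W(3) by (rule card_Diff_subset)
  also have "\<dots> = l - 1" using W(2) R l \<open>finite (insert q R)\<close> by simp
  finally obtain g where "g ` {1..l-1} = W - insert q R"
    using card_eq_imp_ex_image[of "{1..l-1}" "W - insert q R"] W(1) by auto
  then have "insert q (g ` {1..l-1}) \<union> R = W" using W(3) by blast
  then show ?thesis by blast
qed

lemma image_intervals_partition:
  assumes "card (u ` {1..k}) = k" and jl: "j \<le> l" "l \<le> k"
  shows "card (u ` {1..j}) = j" "card (u ` {l+1..k}) = k - l"
    and "u ` {1..j} \<inter> u ` {j+1..l} = {}" "u ` {1..j} \<inter> u ` {l+1..k} = {}"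
    and "u ` {j+1..l} \<inter> u ` {l+1..k} = {}"
proof -
  have inj: "inj_on u {1..k}" using assms(1) by (simp add: eq_card_imp_inj_on)
  show "card (u ` {1..j}) = j" "card (u ` {l+1..k}) = k - l"
    using jl by (simp_all add: card_image inj_on_subset[OF inj])
  show "u ` {1..j} \<inter> u ` {j+1..l} = {}" "u ` {1..j} \<inter> u ` {l+1..k} = {}"
    "u ` {j+1..l} \<inter> u ` {l+1..k} = {}"
    using jl by (auto simp flip: inj_on_image_Int[OF inj])
qed

text \<open>
P, Q, R and D are the sets {u_1..u_j}, {u_(j+1)..u_l}, {u_(l+1)..u_k} and
{v_(j+1)..v_l} of the configuration; the clique W for q = u_p is the one of (CG3).
The indices j and l are recovered as |P| and k - |R|.
\<close>

definition config_sets ::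
    "'a set \<Rightarrow> ('a \<Rightarrow> 'a \<Rightarrow> bool) \<Rightarrow> nat \<Rightarrow> 'a set \<Rightarrow> 'a set \<Rightarrow> 'a set \<Rightarrow> 'a set \<Rightarrow> bool" where
  "config_sets V E k P Q R D \<longleftrightarrow>
     is_clique V E k (P \<union> Q \<union> R) \<and> is_clique V E k (P \<union> D \<union> R)
   \<and> P \<inter> Q = {} \<and> P \<inter> R = {} \<and> Q \<inter> R = {} \<and> D \<inter> (P \<union> R) = {}
   \<and> \<not> kconn V E k (P \<union> Q \<union> R) (P \<union> D \<union> R)
   \<and> (\<forall>q\<in>Q. \<exists>W. is_clique V E k W \<and> insert q R \<subseteq> W \<and> \<not> kconn V E k (P \<union> Q \<union> R) W)"

lemma config_sets_card:
  assumes "config_sets V E k P Q R D"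
  shows "card P + card Q + card R = k" and "card P + card D + card R = k"
proof -
  have U: "is_clique V E k (P \<union> Q \<union> R)" and X: "is_clique V E k (P \<union> D \<union> R)"
    and disj: "P \<inter> Q = {}" "P \<inter> R = {}" "Q \<inter> R = {}" "D \<inter> (P \<union> R) = {}"
    using assms by (auto simp: config_sets_def)
  have "finite P" "finite Q" "finite R" "finite D"
    using U X by (auto simp: is_clique_def)
  moreover have "card (P \<union> Q \<union> R) = k" "card (P \<union> D \<union> R) = k"
    using U X by (auto simp: is_clique_def)
  moreover have "(P \<union> Q) \<inter> R = {}" "(P \<union> D) \<inter> R = {}" "P \<inter> D = {}"
    using disj by auto
  ultimately show "card P + card Q + card R = k" "card P + card D + card R = k"
    using disj by (simp_all add: card_Un_disjoint)
qed

lemma config_if_config_sets: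
  assumes cs: "config_sets V E k P Q R D"
    and card: "card P = j" "card R = k - l" and jl: "j \<le> l" "l \<le> k"
  shows "config V E k j l"
proof -
  let ?U = "P \<union> Q \<union> R"
  have U: "is_clique V E k ?U" and X: "is_clique V E k (P \<union> D \<union> R)"
    and disj: "Q \<inter> R = {}"
    and UX: "\<not> kconn V E k ?U (P \<union> D \<union> R)"
    and W: "\<forall>q\<in>Q. \<exists>W. is_clique V E k W \<and> insert q R \<subseteq> W \<and> \<not> kconn V E k ?U W"
    using cs by (auto simp: config_sets_def)
  have fin: "finite P" "finite Q" "finite R" "finite D"
    using U X by (auto simp: is_clique_def)
  have "card Q = l - j" "card D = l - j"
    using config_sets_card[OF cs] card jl by auto
  then obtain u v where u: "u ` {1..j} = P" "u ` {j+1..l} = Q" "u ` {l+1..k} = R"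
    and v: "v ` {j+1..l} = D"
    using ex_image_intervals[OF fin(1,2,3) card(1) _ card(2) jl]
      card_eq_imp_ex_image[of "{j+1..l}" D] fin(4) by auto
  have "{1..k} = {1..j} \<union> {j+1..l} \<union> {l+1..k}" using jl by auto
  then have u_U: "u ` {1..k} = ?U" using u by (simp add: image_Un)
  have "\<forall>q\<in>Q. \<exists>g. is_clique V E k (insert q (g ` {1..l-1}) \<union> R)
      \<and> \<not> kconn V E k ?U (insert q (g ` {1..l-1}) \<union> R)"
  proof
    fix q assume "q \<in> Q"
    then obtain W where "is_clique V E k W" "insert q R \<subseteq> W" "\<not> kconn V E k ?U W"
      using W by blast
    moreover have "q \<notin> R" using \<open>q \<in> Q\<close> disj by blast
    ultimately obtain g where "insert q (g ` {1..l-1}) \<union> R = W"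
      using ex_image_insert_Un[of W k q R l] card(2) jl(2) by (auto simp: is_clique_def)
    then show "\<exists>g. is_clique V E k (insert q (g ` {1..l-1}) \<union> R)
      \<and> \<not> kconn V E k ?U (insert q (g ` {1..l-1}) \<union> R)"
      using \<open>is_clique V E k W\<close> \<open>\<not> kconn V E k ?U W\<close> by blast
  qed
  then obtain w where w: "\<forall>q\<in>Q. is_clique V E k (insert q (w q ` {1..l-1}) \<union> R)
      \<and> \<not> kconn V E k ?U (insert q (w q ` {1..l-1}) \<union> R)"
    by metis
  have u_in_Q: "u p \<in> Q" if "j < p" "p \<le> l" for p using u(2) that by auto
  show ?thesis
    unfolding config_def
    by (rule exI[of _ u], rule exI[of _ v], rule exI[of _ "\<lambda>p. w (u p)"], unfold u_U u v)
      (use U X UX w u_in_Q in simp)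
qed

lemma config_sets_if_config:
  assumes "config V E k j l" and jl: "j \<le> l" "l \<le> k"
  shows "\<exists>P Q R D. config_sets V E k P Q R D \<and> card P = j \<and> card R = k - l"
proof -
  obtain u v w where
    U: "is_clique V E k (u ` {1..k})" and
    X: "is_clique V E k (u ` {1..j} \<union> v ` {j+1..l} \<union> u ` {l+1..k})" and
    UX: "\<not> kconn V E k (u ` {1..k}) (u ` {1..j} \<union> v ` {j+1..l} \<union> u ` {l+1..k})" and
    W: "\<forall>p. j < p \<and> p \<le> l \<longrightarrow>
          is_clique V E k (insert (u p) (w p ` {1..l-1}) \<union> u ` {l+1..k})
        \<and> \<not> kconn V E k (u ` {1..k}) (insert (u p) (w p ` {1..l-1}) \<union> u ` {l+1..k})"
    using assms(1) unfolding config_def by blast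
  define P Q R D where "P = u ` {1..j}" and "Q = u ` {j+1..l}" and "R = u ` {l+1..k}"
    and "D = v ` {j+1..l}"
  have "{1..k} = {1..j} \<union> {j+1..l} \<union> {l+1..k}" using jl by auto
  then have U_eq: "u ` {1..k} = P \<union> Q \<union> R" by (simp add: P_def Q_def R_def image_Un)
  have "card (u ` {1..k}) = k" using U by (simp add: is_clique_def)
  note partition = image_intervals_partition[OF this jl, folded P_def Q_def R_def]
  have fX: "finite (P \<union> D \<union> R)" and cX: "card (P \<union> D \<union> R) = k"
    using X by (auto simp: is_clique_def P_def D_def R_def)
  have "D \<inter> (P \<union> R) = {}"
  proof -
    have "card (P \<union> R) = j + (k - l)"
      using partition fX by (simp add: card_Un_disjoint)
    moreover have "card D \<le> l - j" unfolding D_def using card_image_le[of "{j+1..l}" v] by simp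
    moreover have "card D + card (P \<union> R) = card (P \<union> D \<union> R) + card (D \<inter> (P \<union> R))"
      using card_Un_Int[of D "P \<union> R"] fX by (simp add: Un_ac)
    ultimately have "card (D \<inter> (P \<union> R)) = 0" using cX jl by linarith
    then show ?thesis using fX by simp
  qed
  moreover have "\<exists>W. is_clique V E k W \<and> insert q R \<subseteq> W \<and> \<not> kconn V E k (P \<union> Q \<union> R) W"
    if "q \<in> Q" for q
  proof -
    obtain p where "p \<in> {j+1..l}" "q = u p" using \<open>q \<in> Q\<close> unfolding Q_def by blast
    then show ?thesis
      using W U_eq by (intro exI[of _ "insert (u p) (w p ` {1..l-1}) \<union> R"]) (auto simp: R_def)
  qed
  ultimately have "config_sets V E k P Q R D"
    using U X UX partition U_eq by (simp add: config_sets_def P_def D_def R_def)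
  then show ?thesis using partition by blast
qed

lemma kconn_exchange_if_not_config:
  assumes no_config: "\<not> config V E k (l - 1) l" and l: "l \<le> k"
    and cs: "config_sets V E k P Q R D" and R: "card R = k - l"
    and K: "kconn V E k (P \<union> Q \<union> R) K" "R \<subseteq> K" and x: "x \<in> Q" "x \<in> K"
    and K': "is_clique V E k (insert y (K - {x}))"
  shows "kconn V E k K (insert y (K - {x}))"
proof (rule ccontr)
  assume not_kconn: "\<not> kconn V E k K (insert y (K - {x}))"
  obtain W where W: "is_clique V E k W" "insert x R \<subseteq> W" "\<not> kconn V E k (P \<union> Q \<union> R) W"
    using cs x(1) by (auto simp: config_sets_def)
  have "x \<notin> R" using cs x(1) by (auto simp: config_sets_def)
  have K_clique: "is_clique V E k K" using K(1) by (rule kconn_is_clique)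
  then have fin: "finite K" "card K = k" by (auto simp: is_clique_def)
  have "y \<notin> K - {x}"
  proof
    assume "y \<in> K - {x}"
    then have "insert y (K - {x}) = K - {x}" by blast
    then have "card (insert y (K - {x})) < card K" using card_Diff1_less[OF fin(1) x(2)] by metis
    then show False using K' fin by (simp add: is_clique_def)
  qed
  moreover have "(K - insert x R) \<union> {x} \<union> R = K" "(K - insert x R) \<union> {y} \<union> R = insert y (K - {x})"
    using K(2) x(2) \<open>x \<notin> R\<close> by blast+
  moreover have "\<not> kconn V E k K W" using not_kconn_if_kconn[OF K(1) W(3)] .
  ultimately have "config_sets V E k (K - insert x R) {x} R {y}"
    unfolding config_sets_def using K_clique K' W(1,2) \<open>x \<notin> R\<close> not_kconn by auto
  moreover have "card (K - insert x R) = l - 1"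
    using K(2) x(2) \<open>x \<notin> R\<close> R fin l by (simp add: card_Diff_subset finite_subset)
  ultimately have "config V E k (l - 1) l"
    using R l by (intro config_if_config_sets) auto
  then show False using no_config by contradiction
qed

lemma kconn_replace_by_neighbours:
  assumes G: "simple_graph V E"
    and deg: "\<forall>v\<in>V. real (degree V E v) > real (k - 1) * real (card V) / real k"
    and U: "is_clique V E k U" and a: "a \<in> V" and T: "finite T" "T \<subseteq> U"
    and exchange: "\<And>K x y. kconn V E k U K \<Longrightarrow> U - T \<subseteq> K \<Longrightarrow> x \<in> T \<Longrightarrow> x \<in> K \<Longrightarrow>
        is_clique V E k (insert y (K - {x})) \<Longrightarrow> kconn V E k K (insert y (K - {x}))"
  shows "\<exists>K. kconn V E k U K \<and> U - T \<subseteq> K \<and> (\<forall>z\<in>K - (U - T). E z a)"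
  using T exchange
proof (induction T rule: finite_induct)
  case empty
  show ?case using kconn_refl[OF U] by blast
next
  case (insert t T)
  have "kconn V E k K (insert y (K - {x}))"
    if "kconn V E k U K" "U - T \<subseteq> K" "x \<in> T" "x \<in> K" "is_clique V E k (insert y (K - {x}))"
    for K x y
    using insert.prems(2) that by blast
  then obtain K where K: "kconn V E k U K" "U - T \<subseteq> K" "\<forall>z\<in>K - (U - T). E z a"
    using insert.IH insert.prems(1) by blast
  have t: "t \<in> K" using insert.hyps(2) insert.prems(1) K(2) by blast
  obtain z where K': "is_clique V E k (insert z (K - {t}))" and z: "E z a"
    using ex_clique_exchange[OF G deg kconn_is_clique[OF K(1)] t a] by blast
  have "kconn V E k K (insert z (K - {t}))"
    using insert.prems(2)[OF K(1) _ _ t K'] K(2) by blast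
  then have "kconn V E k U (insert z (K - {t}))" using K(1) kconn_trans by blast
  moreover have "U - insert t T \<subseteq> insert z (K - {t})" using K(2) by blast
  moreover have "\<forall>z'\<in>insert z (K - {t}) - (U - insert t T). E z' a" using K(3) z by blast
  ultimately show ?case by blast
qed

lemma ex_kconn_clique_containing:
  assumes G: "simple_graph V E"
    and deg: "\<forall>v\<in>V. real (degree V E v) > real (k - 1) * real (card V) / real k"
    and no_config: "\<not> config V E k (l - 1) l" and l: "l \<le> k"
    and cs: "config_sets V E k P Q R D" and R: "card R = k - l"
    and q: "q \<in> Q" and a: "a \<in> D"
  shows "\<exists>Y. kconn V E k (P \<union> Q \<union> R) Y \<and> insert a (P \<union> R) \<subseteq> Y"
proof -
  let ?U = "P \<union> Q \<union> R"
  note exchange = kconn_exchange_if_not_config[OF no_config l cs R]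
  have E_sym: "\<And>x y. E x y \<Longrightarrow> E y x" using G by (simp add: simple_graph_def)
  have U: "is_clique V E k ?U" and X: "is_clique V E k (P \<union> D \<union> R)"
    and disj: "P \<inter> Q = {}" "Q \<inter> R = {}" "D \<inter> (P \<union> R) = {}"
    using cs by (auto simp: config_sets_def)
  have a_V: "a \<in> V" using X a by (auto simp: is_clique_def)
  have a_adj: "E a b" if "b \<in> P \<union> R" for b
  proof -
    have "a \<noteq> b" using a that disj(3) by blast
    then show ?thesis using X a that unfolding is_clique_def by blast
  qed
  have fixed: "?U - (Q - {q}) = insert q (P \<union> R)" using q disj by blast
  have T: "finite (Q - {q})" "Q - {q} \<subseteq> ?U" using U by (auto simp: is_clique_def)
  have exchange_T: "kconn V E k K (insert y (K - {x}))"
    if "kconn V E k ?U K" "?U - (Q - {q}) \<subseteq> K" "x \<in> Q - {q}" "x \<in> K"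
      "is_clique V E k (insert y (K - {x}))" for K x y
    using that by (intro exchange) (auto simp: fixed)
  obtain K where K: "kconn V E k ?U K" "insert q (P \<union> R) \<subseteq> K"
    and K_adj: "\<forall>z\<in>K - insert q (P \<union> R). E z a"
    using kconn_replace_by_neighbours[OF G deg U a_V T exchange_T] unfolding fixed by blast
  show ?thesis
  proof (cases "a \<in> K")
    case True
    then show ?thesis using K by blast
  next
    case False
    have "E a b" if "b \<in> K - {q}" for b
      using that a_adj K_adj E_sym[of b a] by blast
    then have "is_clique V E k (insert a (K - {q}))"
      using is_clique_insert_Diff[OF G kconn_is_clique[OF K(1)] _ a_V] K(2) by blast
    then have "kconn V E k K (insert a (K - {q}))" using exchange K q by blast
    then have "kconn V E k ?U (insert a (K - {q}))" using K(1) kconn_trans by blast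
    moreover have "insert a (P \<union> R) \<subseteq> insert a (K - {q})" using K(2) q disj by blast
    ultimately show ?thesis by blast
  qed
qed

lemma not_config_sets:
  assumes G: "simple_graph V E"
    and deg: "\<forall>v\<in>V. real (degree V E v) > real (k - 1) * real (card V) / real k"
    and no_config: "\<not> config V E k (l - 1) l" "\<not> config V E k (j + 1) l"
    and jl: "j + 2 \<le> l" "l \<le> k" and card: "card P = j" "card R = k - l"
  shows "\<not> config_sets V E k P Q R D"
proof
  assume cs: "config_sets V E k P Q R D"
  let ?U = "P \<union> Q \<union> R" and ?X = "P \<union> D \<union> R"
  have X: "is_clique V E k ?X" and UX: "\<not> kconn V E k ?U ?X"
    and disj: "P \<inter> Q = {}" "P \<inter> R = {}" "Q \<inter> R = {}" "D \<inter> (P \<union> R) = {}"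
    using cs by (auto simp: config_sets_def)
  have "card Q = l - j" "card D = l - j" using config_sets_card[OF cs] card jl by auto
  then have "Q \<noteq> {}" "D \<noteq> {}" using jl by auto
  then obtain q d where q: "q \<in> Q" and d: "d \<in> D" by blast
  have "\<forall>s\<in>D. \<exists>Y. kconn V E k ?U Y \<and> insert s (P \<union> R) \<subseteq> Y"
    using ex_kconn_clique_containing[OF G deg no_config(1) jl(2) cs card(2) q] by simp
  then obtain Y where Y: "\<forall>s\<in>D. kconn V E k ?U (Y s) \<and> insert s (P \<union> R) \<subseteq> Y s"
    by (rule bchoice[elim_format]) blast
  have Y_clique: "is_clique V E k (Y s)" and Y_sub: "insert s R \<subseteq> Y s"
    and not_kconn_XY: "\<not> kconn V E k ?X (Y s)" if "s \<in> D" for s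
  proof -
    have "kconn V E k ?U (Y s)" using Y that by blast
    then show "is_clique V E k (Y s)" "\<not> kconn V E k ?X (Y s)"
      using kconn_is_clique UX not_kconn_if_kconn kconn_sym by blast+
    show "insert s R \<subseteq> Y s" using Y that by blast
  qed
  have "insert d P \<union> (D - {d}) \<union> R = ?X" "insert d P \<union> (Y d - insert d (P \<union> R)) \<union> R = Y d"
    using d Y by blast+
  moreover have "\<forall>s\<in>D - {d}. \<exists>W. is_clique V E k W \<and> insert s R \<subseteq> W \<and> \<not> kconn V E k ?X W"
    using Y_clique Y_sub not_kconn_XY by blast
  ultimately have "config_sets V E k (insert d P) (D - {d}) R (Y d - insert d (P \<union> R))"
    unfolding config_sets_def using X disj d Y_clique[OF d] not_kconn_XY[OF d] by auto
  moreover have "card (insert d P) = j + 1"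
  proof -
    have "finite P" using X by (simp add: is_clique_def)
    moreover have "d \<notin> P" using d disj(4) by blast
    ultimately show ?thesis using card(1) by simp
  qed
  ultimately have "config V E k (j + 1) l"
    using card jl by (intro config_if_config_sets) auto
  then show False using no_config(2) by contradiction
qed

theorem lemma5p1:
  fixes V :: "'a set" and E :: "'a \<Rightarrow> 'a \<Rightarrow> bool" and j k l :: nat
  assumes "simple_graph V E"
    and "3 \<le> j + 2" and "j + 2 \<le> l" and "l \<le> k"
    and "\<forall>v\<in>V. real (degree V E v) > real (k - 1) * real (card V) / real k"
    and "\<exists>C1\<in>kcomponents V E k. \<exists>C2\<in>kcomponents V E k. C1 \<noteq> C2"
    and "\<forall>p q. 0 < p \<and> p < q \<and> q < l \<longrightarrow> \<not> config V E k p q"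
    and "\<forall>p q. j < p \<and> p < q \<and> q = l \<longrightarrow> \<not> config V E k p q"
  shows "\<not> config V E k j l"
proof
  assume "config V E k j l"
  then obtain P Q R D where cs: "config_sets V E k P Q R D" "card P = j" "card R = k - l"
    using config_sets_if_config assms(3,4) by (metis add_leD1)
  have "\<not> config V E k (l - 1) l" "\<not> config V E k (j + 1) l"
    using assms(3) by (auto intro!: assms(8)[rule_format])
  with cs show False
    using not_config_sets[OF assms(1,5) _ _ assms(3,4)] by blast
qed

end
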